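(* Let $G$ be an $r$-graph, fix a residue $k$ modulo $r$, and let $\mathbf x,\mathbf y\in\vec E(G)$. There is a tight walk from $\mathbf x$ to $\mathbf y$ of stretch congruent to $k$ modulo $r$ if and only if $\mathbf x$ is tightly connected to $\mathrm{cyc}^k(\mathbf y)$, where $\mathrm{cyc}(x_1\cdots x_r)=x_rx_1\cdots x_{r-1}$.
   Context: An $r$-graph is an $r$-uniform hypergraph. An oriented edge is an ordered $r$-tuple $x_1\cdots x_r$ of vertices whose underlying set is an edge of $G$; $\vec E(G)$ is the set of oriented edges. $\mathbf x,\mathbf y\in\vec E(G)$ are tightly connected if there is a sequence $\mathbf x=\mathbf z^{(0)},\dots,\mathbf z^{(s)}=\mathbf y$ of oriented edges such that consecutive terms differ in at most one coordinate. A tight walk of stretch $\ell$ is a sequence $v_1\cdots v_{\ell+r}$ of (not necessarily distinct) vertices with $v_{i+1}\cdots v_{i+r}\in\vec E(G)$ for each $0\le i\le\ell$; it goes from $v_1\cdots v_r$ to $v_{\ell+1}\cdots v_{\ell+r}$. *)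

theory Defs
  imports "HOL-Number_Theory.Cong"
begin

definition r_graph :: "nat \<Rightarrow> 'a set set \<Rightarrow> bool" where
  "r_graph r E \<longleftrightarrow> (\<forall>e\<in>E. card e = r)"

definition oriented_edges :: "nat \<Rightarrow> 'a set set \<Rightarrow> 'a list set" where
  "oriented_edges r E = {xs. length xs = r \<and> set xs \<in> E}"

definition tight_step :: "nat \<Rightarrow> 'a set set \<Rightarrow> 'a list \<Rightarrow> 'a list \<Rightarrow> bool" where
  "tight_step r E x y \<longleftrightarrow> x \<in> oriented_edges r E \<and> y \<in> oriented_edges r E \<and>
     card {i. i < r \<and> x ! i \<noteq> y ! i} \<le> 1"

definition tightly_connected :: "nat \<Rightarrow> 'a set set \<Rightarrow> 'a list \<Rightarrow> 'a list \<Rightarrow> bool" where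
  "tightly_connected r E x y \<longleftrightarrow> x \<in> oriented_edges r E \<and> y \<in> oriented_edges r E \<and>
     (tight_step r E)\<^sup>*\<^sup>* x y"

definition tight_walk :: "nat \<Rightarrow> 'a set set \<Rightarrow> nat \<Rightarrow> 'a list \<Rightarrow> bool" where
  "tight_walk r E l vs \<longleftrightarrow> length vs = l + r \<and>
     (\<forall>i\<le>l. take r (drop i vs) \<in> oriented_edges r E)"

definition walk_start :: "nat \<Rightarrow> 'a list \<Rightarrow> 'a list" where
  "walk_start r vs = take r vs"

definition walk_end :: "nat \<Rightarrow> nat \<Rightarrow> 'a list \<Rightarrow> 'a list" where
  "walk_end r l vs = take r (drop l vs)"

definition cyc :: "'a list \<Rightarrow> 'a list" where
  "cyc xs = (if xs = [] then [] else last xs # butlast xs)"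

end

theory Submission
  imports Defs
begin

text \<open>
  If v(1) ... v(l+r) is a tight walk with windows z(i) = v(i+1) ... v(i+r), then cyc z(i+1)
  differs from z(i) only in its first coordinate. As cyc maps tight steps to tight steps,
  x = z(0) is tightly connected to cyc^l y, and cyc^r is the identity on r-tuples.

  Conversely, appending the first vertex of the last window rotates the end of a walk by one
  position at the cost of one unit of stretch. Hence a tight step from w to w[p := c] is
  realised by a walk of stretch exactly r: rotate p times, append c, rotate r - p - 1 more
  times. A tight sequence from x to cyc^k y thus yields a walk of stretch divisible by r,
  and k further rotations turn its end into y.
\<close>

lemma cyc_Nil [simp]: "cyc [] = []"
  by (simp add: cyc_def)

lemma cyc_snoc [simp]: "cyc (xs @ [x]) = x # xs"
  by (simp add: cyc_def)

lemma length_cyc [simp]: "length (cyc xs) = length xs"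
  by (cases xs rule: rev_exhaust) simp_all

lemma set_cyc [simp]: "set (cyc xs) = set xs"
  by (cases xs rule: rev_exhaust) simp_all

lemma rotate1_cyc [simp]: "rotate1 (cyc xs) = xs"
  by (cases xs rule: rev_exhaust) simp_all

lemma length_funpow_cyc [simp]: "length ((cyc ^^ n) xs) = length xs"
  by (induction n) simp_all

lemma set_funpow_cyc [simp]: "set ((cyc ^^ n) xs) = set xs"
  by (induction n) simp_all

lemma rotate_funpow_cyc [simp]: "rotate n ((cyc ^^ n) xs) = xs"
  by (induction n) (simp_all add: rotate1_rotate_swap)

lemma funpow_cyc_cong:
  assumes "[m = n] (mod length xs)"
  shows "(cyc ^^ m) xs = (cyc ^^ n) xs"
proof -
  have "inj (rotate n :: 'a list \<Rightarrow> 'a list)"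
    by (simp add: rotate_def inj_rotate1)
  moreover have "rotate n ((cyc ^^ m) xs) = rotate m ((cyc ^^ m) xs)"
    using assms by (metis rotate_conv_mod length_funpow_cyc cong_def)
  ultimately show ?thesis
    by (metis injD rotate_funpow_cyc)
qed

lemma cyc_list_update:
  assumes "p < length xs"
  shows "cyc (xs[p := c]) = (cyc xs)[Suc p mod length xs := c]"
proof (cases xs rule: rev_exhaust)
  case (snoc ys y)
  then show ?thesis
    using assms by (cases "p = length ys") (auto simp: list_update_append)
qed (use assms in simp)

lemma cyc_in_oriented_edges_iff [simp]:
  "cyc xs \<in> oriented_edges r E \<longleftrightarrow> xs \<in> oriented_edges r E"
  by (simp add: oriented_edges_def)

lemma funpow_cyc_in_oriented_edges_iff [simp]:
  "(cyc ^^ n) xs \<in> oriented_edges r E \<longleftrightarrow> xs \<in> oriented_edges r E"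
  by (simp add: oriented_edges_def)

lemma rotate_in_oriented_edges_iff [simp]:
  "rotate n xs \<in> oriented_edges r E \<longleftrightarrow> xs \<in> oriented_edges r E"
  by (simp add: oriented_edges_def)

lemma card_nth_diff_le_1_iff:
  assumes "length a = n" "length b = n" "0 < n"
  shows "card {i. i < n \<and> a ! i \<noteq> b ! i} \<le> 1 \<longleftrightarrow> (\<exists>p<n. \<exists>c. b = a[p := c])"
    (is "card ?D \<le> 1 \<longleftrightarrow> _")
proof
  assume "card ?D \<le> 1"
  then have "\<exists>p<n. ?D \<subseteq> {p}"
    using assms(3) card_le_Suc0_iff_eq[of ?D] by (cases "?D = {}") auto
  then obtain p where "p < n" "?D \<subseteq> {p}"
    by blast
  moreover have "b = a[p := b ! p]"
  proof (rule nth_equalityI)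
    fix i
    assume "i < length b"
    then show "b ! i = a[p := b ! p] ! i"
      using \<open>?D \<subseteq> {p}\<close> assms by (cases "i = p") auto
  qed (use assms in simp)
  ultimately show "\<exists>p<n. \<exists>c. b = a[p := c]"
    by blast
next
  assume "\<exists>p<n. \<exists>c. b = a[p := c]"
  then obtain p c where "b = a[p := c]"
    by blast
  then have "?D \<subseteq> {p}"
    by (auto intro: ccontr)
  then show "card ?D \<le> 1"
    using card_mono[of "{p}" ?D] by simp
qed

lemma tight_step_iff_list_update:
  assumes "0 < r"
  shows "tight_step r E a b \<longleftrightarrow>
    a \<in> oriented_edges r E \<and> b \<in> oriented_edges r E \<and> (\<exists>p<r. \<exists>c. b = a[p := c])"
  using card_nth_diff_le_1_iff[of a r b] assms
  by (auto simp: tight_step_def oriented_edges_def)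

lemma tight_step_cyc:
  assumes "0 < r" "tight_step r E a b"
  shows "tight_step r E (cyc a) (cyc b)"
proof -
  obtain p c where p: "p < r" and b: "b = a[p := c]"
    and edges: "a \<in> oriented_edges r E" "b \<in> oriented_edges r E"
    using assms by (auto simp: tight_step_iff_list_update)
  have "cyc b = (cyc a)[Suc p mod r := c]"
    using b p edges(1) by (simp add: cyc_list_update oriented_edges_def)
  moreover have "Suc p mod r < r"
    using assms(1) by simp
  ultimately have "\<exists>q<r. \<exists>d. cyc b = (cyc a)[q := d]"
    by blast
  then show ?thesis
    using assms(1) edges by (simp add: tight_step_iff_list_update)
qed

lemma rtranclp_tight_step_funpow_cyc:
  assumes "0 < r" "(tight_step r E)\<^sup>*\<^sup>* a b"
  shows "(tight_step r E)\<^sup>*\<^sup>* ((cyc ^^ n) a) ((cyc ^^ n) b)"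
proof -
  have step: "tight_step r E ((cyc ^^ n) u) ((cyc ^^ n) v)" if "tight_step r E u v" for u v
    using that by (induction n) (simp_all add: tight_step_cyc assms(1))
  show ?thesis
    using assms(2) by induction (auto intro: rtranclp.rtrancl_into_rtrancl step)
qed

definition tight_walk_between :: "nat \<Rightarrow> 'a set set \<Rightarrow> nat \<Rightarrow> 'a list \<Rightarrow> 'a list \<Rightarrow> bool"
  where "tight_walk_between r E l x y \<longleftrightarrow>
    (\<exists>vs. tight_walk r E l vs \<and> walk_start r vs = x \<and> walk_end r l vs = y)"

lemma tight_walk_between_oriented_edges:
  assumes "tight_walk_between r E l x y"
  shows "x \<in> oriented_edges r E" "y \<in> oriented_edges r E"
  using assms by (auto simp: tight_walk_between_def tight_walk_def walk_start_def walk_end_def)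

lemma tight_walk_between_0:
  "tight_walk_between r E 0 x y \<longleftrightarrow> x \<in> oriented_edges r E \<and> y = x"
  by (auto simp: tight_walk_between_def tight_walk_def walk_start_def walk_end_def
      oriented_edges_def)

lemma walk_start_snoc:
  "r \<le> length vs \<Longrightarrow> walk_start r (vs @ [c]) = walk_start r vs"
  by (simp add: walk_start_def)

lemma walk_end_snoc:
  "0 < r \<Longrightarrow> length vs = l + r \<Longrightarrow> walk_end r (Suc l) (vs @ [c]) = tl (walk_end r l vs) @ [c]"
  by (simp add: walk_end_def drop_Suc tl_drop)

lemma tight_walk_snoc:
  assumes "0 < r" "length vs = l + r"
  shows "tight_walk r E (Suc l) (vs @ [c]) \<longleftrightarrow>
    tight_walk r E l vs \<and> tl (walk_end r l vs) @ [c] \<in> oriented_edges r E"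
proof -
  have "(\<forall>i\<le>l. take r (drop i (vs @ [c])) \<in> oriented_edges r E) \<longleftrightarrow>
      (\<forall>i\<le>l. take r (drop i vs) \<in> oriented_edges r E)"
    using assms(2) by simp
  moreover have "take r (drop (Suc l) (vs @ [c])) = tl (walk_end r l vs) @ [c]"
    using walk_end_snoc[OF assms] assms by (simp add: walk_end_def)
  moreover have "(\<forall>i\<le>Suc l. P i) \<longleftrightarrow> (\<forall>i\<le>l. P i) \<and> P (Suc l)" for P :: "nat \<Rightarrow> bool"
    by (auto simp: le_Suc_eq)
  ultimately show ?thesis
    using assms(2) unfolding tight_walk_def by simp
qed

lemma tight_walk_between_Suc:
  assumes "0 < r"
  shows "tight_walk_between r E (Suc l) x z \<longleftrightarrow>
    (\<exists>u c. tight_walk_between r E l x u \<and> z = tl u @ [c] \<and> z \<in> oriented_edges r E)"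
proof
  assume "tight_walk_between r E (Suc l) x z"
  then obtain vs where walk: "tight_walk r E (Suc l) vs"
    and ends: "walk_start r vs = x" "walk_end r (Suc l) vs = z"
    unfolding tight_walk_between_def by blast
  have "length vs = Suc l + r"
    using walk by (simp add: tight_walk_def)
  then obtain ws c where vs: "vs = ws @ [c]" and len: "length ws = l + r"
    by (cases vs rule: rev_exhaust) auto
  have "tight_walk r E l ws" "tl (walk_end r l ws) @ [c] \<in> oriented_edges r E"
    using walk tight_walk_snoc[OF assms len] vs by simp_all
  moreover have "walk_start r ws = x"
    using ends(1) vs walk_start_snoc[of r ws c] len by simp
  moreover have "z = tl (walk_end r l ws) @ [c]"
    using ends(2) vs walk_end_snoc[OF assms len] by simp
  ultimately show "\<exists>u c. tight_walk_between r E l x u \<and> z = tl u @ [c] \<and> z \<in> oriented_edges r E"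
    unfolding tight_walk_between_def by blast
next
  assume "\<exists>u c. tight_walk_between r E l x u \<and> z = tl u @ [c] \<and> z \<in> oriented_edges r E"
  then obtain vs c where walk: "tight_walk r E l vs" and start: "walk_start r vs = x"
    and z: "z = tl (walk_end r l vs) @ [c]" "z \<in> oriented_edges r E"
    unfolding tight_walk_between_def by blast
  have len: "length vs = l + r"
    using walk by (simp add: tight_walk_def)
  have "tight_walk r E (Suc l) (vs @ [c])"
    using tight_walk_snoc[OF assms len] walk z by simp
  moreover have "walk_start r (vs @ [c]) = x"
    using start walk_start_snoc[of r vs c] len by simp
  moreover have "walk_end r (Suc l) (vs @ [c]) = z"
    using walk_end_snoc[OF assms len] z(1) by simp
  ultimately show "tight_walk_between r E (Suc l) x z"
    unfolding tight_walk_between_def by blast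
qed

lemma tight_walk_between_rotate:
  assumes "0 < r" "tight_walk_between r E l x u"
  shows "tight_walk_between r E (l + m) x (rotate m u)"
proof (induction m)
  case 0
  then show ?case using assms(2) by simp
next
  case (Suc m)
  have u: "u \<in> oriented_edges r E"
    using tight_walk_between_oriented_edges(2)[OF assms(2)] .
  then have "rotate m u \<noteq> []"
    using assms(1) by (auto simp: oriented_edges_def)
  then have "rotate (Suc m) u = tl (rotate m u) @ [hd (rotate m u)]"
    by (simp add: rotate1_hd_tl)
  moreover have "rotate (Suc m) u \<in> oriented_edges r E"
    using u by (simp only: rotate_in_oriented_edges_iff)
  ultimately show ?case
    using Suc.IH unfolding add_Suc_right tight_walk_between_Suc[OF assms(1)] by blast
qed

lemma tight_walk_between_tight_step:
  assumes "0 < r" "tight_walk_between r E l x w" "tight_step r E w w'"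
  shows "tight_walk_between r E (l + r) x w'"
proof -
  obtain p c where p: "p < r" and w': "w' = w[p := c]" "w' \<in> oriented_edges r E"
    using assms(1,3) by (auto simp: tight_step_iff_list_update)
  have len: "length w = r"
    using tight_walk_between_oriented_edges(2)[OF assms(2)] by (simp add: oriented_edges_def)
  have walk: "tight_walk_between r E (l + p) x (rotate p w)"
    using tight_walk_between_rotate[OF assms(1,2)] .
  have "rotate p w = w ! p # drop (Suc p) w @ take p w"
    using p len by (simp add: rotate_drop_take Cons_nth_drop_Suc)
  moreover have "rotate p w' = c # drop (Suc p) w @ take p w"
    using p len w'(1) by (simp add: rotate_drop_take upd_conv_take_nth_drop)
  ultimately have "rotate (Suc p) w' = tl (rotate p w) @ [c]"
    by simp
  moreover have "rotate (Suc p) w' \<in> oriented_edges r E"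
    using w'(2) by (simp only: rotate_in_oriented_edges_iff)
  ultimately have "tight_walk_between r E (Suc (l + p)) x (rotate (Suc p) w')"
    using walk unfolding tight_walk_between_Suc[OF assms(1)] by blast
  then have "tight_walk_between r E (Suc (l + p) + (r - Suc p)) x
      (rotate (r - Suc p) (rotate (Suc p) w'))"
    by (rule tight_walk_between_rotate[OF assms(1)])
  moreover have "Suc (l + p) + (r - Suc p) = l + r"
    using p by simp
  moreover have "rotate (r - Suc p) (rotate (Suc p) w') = w'"
    using p len w'(1) by (simp add: rotate_rotate del: rotate_Suc)
  ultimately show ?thesis
    by simp
qed

lemma rtranclp_tight_step_imp_tight_walk_between:
  assumes "0 < r" "x \<in> oriented_edges r E" "(tight_step r E)\<^sup>*\<^sup>* x w"
  shows "\<exists>q. tight_walk_between r E (q * r) x w"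
  using assms(3)
proof (induction rule: rtranclp_induct)
  case base
  have "tight_walk_between r E (0 * r) x x"
    using assms(2) by (simp add: tight_walk_between_0)
  then show ?case ..
next
  case (step w w')
  then obtain q where "tight_walk_between r E (q * r) x w"
    by blast
  then have "tight_walk_between r E (q * r + r) x w'"
    using tight_walk_between_tight_step[OF assms(1)] step(2) by blast
  then have "tight_walk_between r E (Suc q * r) x w'"
    by (simp add: add.commute)
  then show ?case ..
qed

lemma tight_walk_between_imp_rtranclp_tight_step:
  assumes "0 < r" "tight_walk_between r E l x z"
  shows "(tight_step r E)\<^sup>*\<^sup>* x ((cyc ^^ l) z)"
  using assms(2)
proof (induction l arbitrary: z)
  case 0
  then show ?case by (simp add: tight_walk_between_0)
next
  case (Suc l)
  obtain u c where walk: "tight_walk_between r E l x u"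
    and z: "z = tl u @ [c]" "z \<in> oriented_edges r E"
    using Suc.prems unfolding tight_walk_between_Suc[OF assms(1)] by blast
  have u: "u \<in> oriented_edges r E"
    using tight_walk_between_oriented_edges(2)[OF walk] .
  then have "u \<noteq> []"
    using assms(1) by (auto simp: oriented_edges_def)
  then have "cyc z = u[0 := c]"
    using z(1) by (cases u) simp_all
  moreover have "cyc z \<in> oriented_edges r E"
    using z(2) by simp
  ultimately have "tight_step r E u (cyc z)"
    using assms(1) u unfolding tight_step_iff_list_update[OF assms(1)] by blast
  then have "(tight_step r E)\<^sup>*\<^sup>* ((cyc ^^ l) u) ((cyc ^^ l) (cyc z))"
    using rtranclp_tight_step_funpow_cyc[OF assms(1)] by blast
  moreover have "(cyc ^^ l) (cyc z) = (cyc ^^ Suc l) z"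
    by (simp only: funpow_Suc_right comp_apply)
  ultimately show ?case
    using Suc.IH[OF walk] by (metis rtranclp_trans)
qed

theorem proposition3p9:
  fixes r :: nat and E :: "'a set set" and k :: nat and x y :: "'a list"
  assumes "r \<ge> 1"
    and "r_graph r E"
    and "x \<in> oriented_edges r E" and "y \<in> oriented_edges r E"
  shows "(\<exists>l vs. [l = k] (mod r) \<and> tight_walk r E l vs \<and>
                 walk_start r vs = x \<and> walk_end r l vs = y)
         \<longleftrightarrow> tightly_connected r E x ((cyc ^^ k) y)"
proof -
  have pos: "0 < r"
    using assms(1) by simp
  show ?thesis
  proof
    assume "\<exists>l vs. [l = k] (mod r) \<and> tight_walk r E l vs \<and>
                   walk_start r vs = x \<and> walk_end r l vs = y"
    then obtain l where "[l = k] (mod r)" and walk: "tight_walk_between r E l x y"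
      unfolding tight_walk_between_def by blast
    moreover have "length y = r"
      using assms(4) by (simp add: oriented_edges_def)
    ultimately have "(cyc ^^ l) y = (cyc ^^ k) y"
      using funpow_cyc_cong by metis
    moreover have "(tight_step r E)\<^sup>*\<^sup>* x ((cyc ^^ l) y)"
      using tight_walk_between_imp_rtranclp_tight_step[OF pos walk] .
    ultimately show "tightly_connected r E x ((cyc ^^ k) y)"
      using assms(3,4) by (simp add: tightly_connected_def)
  next
    assume "tightly_connected r E x ((cyc ^^ k) y)"
    then obtain q where "tight_walk_between r E (q * r) x ((cyc ^^ k) y)"
      using rtranclp_tight_step_imp_tight_walk_between[OF pos assms(3)]
      unfolding tightly_connected_def by blast
    then have "tight_walk_between r E (q * r + k) x (rotate k ((cyc ^^ k) y))"
      by (rule tight_walk_between_rotate[OF pos])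
    moreover have "[q * r + k = k] (mod r)"
      by (simp add: cong_def)
    ultimately show "\<exists>l vs. [l = k] (mod r) \<and> tight_walk r E l vs \<and>
                   walk_start r vs = x \<and> walk_end r l vs = y"
      unfolding tight_walk_between_def rotate_funpow_cyc by blast
  qed
qed

end
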